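(* Let $T\in(0,\infty]$, let $f\in C([0,T)\times\bar U_K)$ be tilted (i.e. for every $t$, and all $x,y\in\bar U_K$ with $y-x\in\bar U_K^*$, one has $f(t,x)\le f(t,y)$), let $(t,x)\in(0,T)\times\partial U_K$, and let $\phi\in C^\infty((0,T)\times\bar U_K)$ be such that $(t,x)$ is a local maximum of $f-\phi$. Then \[ \inf_{\nu\in\mathbf n(x)}\nu\cdot\nabla\phi(t,x)\le0. \]
   Context: Fix integers $D,K\ge1$. Either $\mathcal C=(0,\infty)^D$, $\bar{\mathcal C}=\mathbb{R}_+^D$, $\mathcal E=\mathbb{R}^D$ with the Euclidean inner product, or $\mathcal C=S^D_{++}$ (positive definite symmetric $D\times D$ matrices), $\bar{\mathcal C}=S^D_+$ (positive semidefinite), $\mathcal E=S^D$ with $a\cdot b=\mathrm{tr}(a^*b)$; $|a|=(a\cdot a)^{1/2}$ and $x\le y$ means $y-x\in\bar{\mathcal C}$. $U_K=\{x=(x_1,\dots,x_K)\in\mathcal C^K: x_{k+1}-x_k\in\mathcal C\ \forall k\le K-1\}$, $\bar U_K=\{x\in\bar{\mathcal C}^K: x_1\le\dots\le x_K\}$ (its closure), $\partial U_K=\bar U_K\setminus U_K$. On $\mathcal E^K$, $x\cdot y=\sum_k x_k\cdot y_k$, $|x|=(x\cdot x)^{1/2}$, $\bar U_K^*=\{x\in\mathcal E^K: x\cdot v\ge0\ \forall v\in\bar U_K\}$, and for $x\in\partial U_K$, $\mathbf n(x)=\{\nu\in\mathcal E^K:|\nu|=1,\ (y-x)\cdot\nu\le0\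 \forall y\in\bar U_K\}$. $\nabla\phi=(\partial_{x_1}\phi,\dots,\partial_{x_K}\phi)$. *)

theory Defs
  imports "HOL-Analysis.Analysis" "HOL-Library.Extended_Real"
begin

text \<open>Setting 1: E = R^D (type real^'d), C = open positive orthant, Cbar = closed orthant.\<close>
definition orthant_open :: "(real^'d) set" where
  "orthant_open = {x. \<forall>i. 0 < x $ i}"
definition orthant_closed :: "(real^'d) set" where
  "orthant_closed = {x. \<forall>i. 0 \<le> x $ i}"

text \<open>Setting 2: E = S^D, the symmetric D x D matrices inside real^'d^'d, whose inner
  product (sum of entrywise products) is tr(a^T b); C = S^D_{++}, Cbar = S^D_+.\<close>
definition sym_mats :: "(real^'d^'d) set" where
  "sym_mats = {A. transpose A = A}"
definition pd_mats :: "(real^'d^'d) set" where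
  "pd_mats = {A. transpose A = A \<and> (\<forall>v. v \<noteq> 0 \<longrightarrow> 0 < v \<bullet> (A *v v))}"
definition psd_mats :: "(real^'d^'d) set" where
  "psd_mats = {A. transpose A = A \<and> (\<forall>v. 0 \<le> v \<bullet> (A *v v))}"

text \<open>The index set {1..K} is a finite linearly ordered type 'k; K = CARD('k).
  k' is the successor of k iff k < k' with nothing strictly in between.\<close>
definition is_succ :: "'k::linorder \<Rightarrow> 'k \<Rightarrow> bool" where
  "is_succ k k' \<longleftrightarrow> k < k' \<and> \<not> (\<exists>j. k < j \<and> j < k')"

definition powK :: "'e set \<Rightarrow> ('e^'k) set" where
  "powK E = {x. \<forall>k. x $ k \<in> E}"

definition UK :: "('e::real_vector) set \<Rightarrow> ('e^'k::{finite,linorder}) set" where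
  "UK C = {x. (\<forall>k. x $ k \<in> C) \<and> (\<forall>k k'. is_succ k k' \<longrightarrow> x $ k' - x $ k \<in> C)}"

definition UKbar :: "('e::real_vector) set \<Rightarrow> ('e^'k::{finite,linorder}) set" where
  "UKbar Cbar = {x. (\<forall>k. x $ k \<in> Cbar) \<and> (\<forall>k k'. is_succ k k' \<longrightarrow> x $ k' - x $ k \<in> Cbar)}"

definition dual_cone :: "('e::real_inner) set \<Rightarrow> ('e^'k::finite) set \<Rightarrow> ('e^'k) set" where
  "dual_cone E S = {x \<in> powK E. \<forall>v\<in>S. 0 \<le> x \<bullet> v}"

definition normals :: "('e::real_inner) set \<Rightarrow> ('e^'k::finite) set \<Rightarrow> 'e^'k \<Rightarrow> ('e^'k) set" where
  "normals E S x = {\<nu> \<in> powK E. norm \<nu> = 1 \<and> (\<forall>y\<in>S. (y - x) \<bullet> \<nu> \<le> 0)}"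

definition tilted :: "ereal \<Rightarrow> ('v::real_inner) set \<Rightarrow> 'v set \<Rightarrow> (real \<times> 'v \<Rightarrow> real) \<Rightarrow> bool" where
  "tilted T Ubar Ustar f \<longleftrightarrow>
     (\<forall>t x y. 0 \<le> t \<and> ereal t < T \<and> x \<in> Ubar \<and> y \<in> Ubar \<and> y - x \<in> Ustar \<longrightarrow> f (t, x) \<le> f (t, y))"

text \<open>A real-valued f is C^infinity on an open set O iff there is a family F of functions
  containing f such that every member of F is (Frechet) differentiable on O and all its
  directional derivatives x \<mapsto> Dg(x)v again belong to F (i.e. all iterated derivatives exist).\<close>
definition smooth_on :: "'a::real_normed_vector set \<Rightarrow> ('a \<Rightarrow> real) \<Rightarrow> bool" where
  "smooth_on W f \<longleftrightarrow> (\<exists>F. f \<in> F \<and>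
     (\<forall>g\<in>F. \<exists>g'. (\<forall>x\<in>W. (g has_derivative g' x) (at x)) \<and> (\<forall>v. (\<lambda>x. g' x v) \<in> F)))"

text \<open>phi in C^infinity(S) for a (not necessarily open) set S: phi is the restriction of a
  function smooth on an open neighbourhood of S.\<close>
definition smooth_on_set :: "'a::real_normed_vector set \<Rightarrow> ('a \<Rightarrow> real) \<Rightarrow> bool" where
  "smooth_on_set S f \<longleftrightarrow> (\<exists>W. open W \<and> S \<subseteq> W \<and> smooth_on W f)"

definition xgrad :: "(real \<times> 'v \<Rightarrow> real) \<Rightarrow> real \<Rightarrow> 'v::euclidean_space \<Rightarrow> 'v" where
  "xgrad \<phi> t x = (\<Sum>b\<in>Basis. frechet_derivative (\<lambda>y. \<phi> (t, y)) (at x) b *\<^sub>R b)"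

definition dom_closed :: "ereal \<Rightarrow> 'v set \<Rightarrow> (real \<times> 'v) set" where
  "dom_closed T S = {(s, y). 0 \<le> s \<and> ereal s < T \<and> y \<in> S}"
definition dom_open :: "ereal \<Rightarrow> 'v set \<Rightarrow> (real \<times> 'v) set" where
  "dom_open T S = {(s, y). 0 < s \<and> ereal s < T \<and> y \<in> S}"

definition local_max_on :: "('a::metric_space) set \<Rightarrow> ('a \<Rightarrow> real) \<Rightarrow> 'a \<Rightarrow> bool" where
  "local_max_on S g p \<longleftrightarrow> p \<in> S \<and> (\<exists>e>0. \<forall>q\<in>S. dist q p < e \<longrightarrow> g q \<le> g p)"

end

theory Submission
  imports Defs
begin

(* At a boundary point x of the closed convex cone Ubar_K there is a unit outer normal n0; if
   n0 . grad phi <= 0 we are done. Otherwise a = -n0 lies in the dual cone and is a descent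
   direction. The projection y of x + lam a onto Ubar_K has the form x + lam (a - rho) with rho
   in the polar cone, so y - x lies in the dual cone: tiltedness gives f(t,x) <= f(t,y), and the
   local maximum of f - phi turns this into phi(t,x) <= phi(t,y). Hence grad phi . (a - rho) is
   bounded below by a quantity tending to 0 with lam, and a limit point l of the residuals rho is
   an outer normal at x with grad phi . l <= grad phi . a < 0. *)

lemma cone_normal_iff:
  assumes "cone U" "x \<in> U"
  shows "(\<forall>y\<in>U. (y - x) \<bullet> \<nu> \<le> 0) \<longleftrightarrow> x \<bullet> \<nu> = 0 \<and> (\<forall>u\<in>U. u \<bullet> \<nu> \<le> 0)"
proof
  assume normal: "\<forall>y\<in>U. (y - x) \<bullet> \<nu> \<le> 0"
  have "(0 - x) \<bullet> \<nu> \<le> 0" "(2 *\<^sub>R x - x) \<bullet> \<nu> \<le> 0"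
    using normal mem_cone[OF assms, of 0] mem_cone[OF assms, of 2] by auto
  then have "x \<bullet> \<nu> = 0" by (simp add: inner_diff_left algebra_simps)
  with normal show "x \<bullet> \<nu> = 0 \<and> (\<forall>u\<in>U. u \<bullet> \<nu> \<le> 0)" by (auto simp: inner_diff_left)
qed (auto simp: inner_diff_left)

lemma closest_point_cone_residual:
  fixes U :: "'a::euclidean_space set"
  assumes U: "closed U" "convex U" "cone U" "U \<noteq> {}"
  shows "(z - closest_point U z) \<bullet> closest_point U z = 0"
    and "u \<in> U \<Longrightarrow> (z - closest_point U z) \<bullet> u \<le> 0"
proof -
  have "\<forall>y\<in>U. (y - closest_point U z) \<bullet> (z - closest_point U z) \<le> 0"
    using closest_point_dot[OF U(2,1)] by (simp add: inner_commute)
  then have "closest_point U z \<bullet> (z - closest_point U z) = 0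
      \<and> (\<forall>u\<in>U. u \<bullet> (z - closest_point U z) \<le> 0)"
    using cone_normal_iff[OF U(3) closest_point_in_set[OF U(1,4)]] by blast
  then show "(z - closest_point U z) \<bullet> closest_point U z = 0"
    and "u \<in> U \<Longrightarrow> (z - closest_point U z) \<bullet> u \<le> 0"
    by (auto simp: inner_commute)
qed

lemma has_derivative_nonneg_along_approach:
  fixes \<psi> :: "'a::real_normed_vector \<Rightarrow> real"
  assumes D: "(\<psi> has_derivative L) (at x)"
    and lam: "lam \<longlonglongrightarrow> 0" "\<And>n. 0 < lam n" and d: "d \<longlonglongrightarrow> v"
    and above: "\<forall>\<^sub>F n in sequentially. \<psi> x \<le> \<psi> (x + lam n *\<^sub>R d n)"
  shows "0 \<le> L v"
proof -
  have bl: "bounded_linear L" using D by (rule has_derivative_bounded_linear)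
  have bound: "0 \<le> L v + \<epsilon> * norm v" if "0 < \<epsilon>" for \<epsilon>
  proof (rule tendsto_lowerbound)
    show "(\<lambda>n. L (d n) + \<epsilon> * norm (d n)) \<longlonglongrightarrow> L v + \<epsilon> * norm v"
      by (intro tendsto_intros bounded_linear.tendsto[OF bl] d)
    obtain \<delta> where \<delta>: "0 < \<delta>"
      "\<And>w. norm (w - x) < \<delta> \<Longrightarrow> norm (\<psi> w - \<psi> x - L (w - x)) \<le> \<epsilon> * norm (w - x)"
      using D \<open>0 < \<epsilon>\<close> unfolding has_derivative_at_alt by blast
    have "(\<lambda>n. lam n *\<^sub>R d n) \<longlonglongrightarrow> 0" using tendsto_scaleR[OF lam(1) d] by simp
    then have "\<forall>\<^sub>F n in sequentially. norm (lam n *\<^sub>R d n) < \<delta>"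
      using order_tendstoD(2)[OF tendsto_norm_zero \<delta>(1)] by blast
    with above show "\<forall>\<^sub>F n in sequentially. 0 \<le> L (d n) + \<epsilon> * norm (d n)"
    proof eventually_elim
      case (elim n)
      have "0 \<le> \<psi> (x + lam n *\<^sub>R d n) - \<psi> x" using elim(1) by simp
      also have "\<dots> \<le> L (lam n *\<^sub>R d n) + \<epsilon> * norm (lam n *\<^sub>R d n)"
        using \<delta>(2)[of "x + lam n *\<^sub>R d n"] elim(2) by (simp add: abs_le_iff)
      also have "\<dots> = lam n * (L (d n) + \<epsilon> * norm (d n))"
        using lam(2)[of n] by (simp add: linear_scale[OF bounded_linear.linear[OF bl]] algebra_simps)
      finally show ?case using lam(2)[of n] by (simp add: zero_le_mult_iff)
    qed
  qed simp
  show "0 \<le> L v"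
  proof (rule field_le_epsilon)
    fix e :: real assume "0 < e"
    have "0 \<le> L v + e / (norm v + 1) * norm v"
      using \<open>0 < e\<close> by (intro bound divide_pos_pos) (auto intro: add_nonneg_pos)
    also have "e / (norm v + 1) * norm v \<le> e"
      using \<open>0 < e\<close> by (simp add: divide_le_eq add_pos_nonneg not_less)
    finally show "0 \<le> L v + e" by simp
  qed
qed

lemma closest_point_cone_dual_shift:
  fixes U :: "'a::euclidean_space set"
  assumes U: "closed U" "convex U" "cone U" and x: "x \<in> U"
    and a: "\<forall>u\<in>U. 0 \<le> a \<bullet> u" and lam: "0 < lam"
  defines "y \<equiv> closest_point U (x + lam *\<^sub>R a)"
  defines "\<rho> \<equiv> (x + lam *\<^sub>R a - y) /\<^sub>R lam"
  shows "y - x = lam *\<^sub>R (a - \<rho>)"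
    and "norm (y - x) \<le> lam * norm a"
    and "norm \<rho> \<le> norm a"
    and "- (lam * (norm a)\<^sup>2) \<le> \<rho> \<bullet> x"
    and "u \<in> U \<Longrightarrow> \<rho> \<bullet> u \<le> 0"
    and "u \<in> U \<Longrightarrow> 0 \<le> (y - x) \<bullet> u"
proof -
  let ?z = "x + lam *\<^sub>R a"
  have Une: "U \<noteq> {}" using x by blast
  have r_y: "(?z - y) \<bullet> y = 0" and r_U: "\<And>u. u \<in> U \<Longrightarrow> (?z - y) \<bullet> u \<le> 0"
    unfolding y_def using closest_point_cone_residual[OF U Une] by blast+
  have z_y: "?z - y = lam *\<^sub>R \<rho>" using lam by (simp add: \<rho>_def)
  show "y - x = lam *\<^sub>R (a - \<rho>)" using z_y by (simp add: algebra_simps)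
  have "dist (closest_point U ?z) (closest_point U x) \<le> dist ?z x"
    by (rule closest_point_lipschitz[OF U(2,1) Une])
  then show y_x: "norm (y - x) \<le> lam * norm a"
    using lam by (simp add: y_def closest_point_self[OF x] dist_norm)
  have "dist ?z y \<le> dist ?z x" unfolding y_def by (rule closest_point_le[OF U(1) x])
  then have z_y_norm: "norm (?z - y) \<le> lam * norm a" using lam by (simp add: dist_norm)
  then show "norm \<rho> \<le> norm a" using lam by (simp add: z_y)
  have "- (norm (?z - y) * norm (x - y)) \<le> (?z - y) \<bullet> (x - y)"
    using Cauchy_Schwarz_ineq2[of "?z - y" "x - y"] by linarith
  moreover have "norm (?z - y) * norm (x - y) \<le> (lam * norm a) * (lam * norm a)"
    using mult_mono[OF z_y_norm y_x] lam by (simp add: norm_minus_commute)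
  moreover have "(?z - y) \<bullet> (x - y) = lam * (\<rho> \<bullet> x)"
    using r_y by (simp add: inner_diff_right) (simp add: z_y)
  ultimately have "lam * - (lam * (norm a)\<^sup>2) \<le> lam * (\<rho> \<bullet> x)"
    by (simp add: power2_eq_square algebra_simps)
  then show "- (lam * (norm a)\<^sup>2) \<le> \<rho> \<bullet> x" using mult_le_cancel_left_pos[OF lam] by blast
  show "u \<in> U \<Longrightarrow> \<rho> \<bullet> u \<le> 0"
    using r_U lam by (simp add: z_y zero_le_mult_iff mult_le_0_iff)
  show "0 \<le> (y - x) \<bullet> u" if "u \<in> U" for u
  proof -
    have "0 \<le> lam * (a \<bullet> u)" using a that lam by simp
    then show ?thesis using r_U[OF that] by (simp add: algebra_simps inner_diff_left)
  qed
qed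

lemma cone_normal_below_dual_descent:
  fixes U S :: "'a::euclidean_space set" and \<psi> :: "'a \<Rightarrow> real"
  assumes S: "subspace S" "U \<subseteq> S"
    and U: "closed U" "convex U" "cone U" and x: "x \<in> U"
    and a: "a \<in> S" "norm a = 1" "\<forall>u\<in>U. 0 \<le> a \<bullet> u"
    and D: "(\<psi> has_derivative L) (at x)" and e: "0 < e"
    and min_dual: "\<And>y. y \<in> U \<Longrightarrow> \<forall>u\<in>U. 0 \<le> (y - x) \<bullet> u \<Longrightarrow> norm (y - x) < e \<Longrightarrow> \<psi> x \<le> \<psi> y"
  shows "\<exists>l\<in>S. (\<forall>y\<in>U. (y - x) \<bullet> l \<le> 0) \<and> L l \<le> L a"
proof -
  define lam where "lam n = inverse (real (Suc n))" for n
  define y where "y n = closest_point U (x + lam n *\<^sub>R a)" for n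
  define \<rho> where "\<rho> n = (x + lam n *\<^sub>R a - y n) /\<^sub>R lam n" for n
  have lam_pos: "0 < lam n" for n by (simp add: lam_def)
  have lam_0: "lam \<longlonglongrightarrow> 0" unfolding lam_def by (rule LIMSEQ_inverse_real_of_nat)
  have y_x: "y n - x = lam n *\<^sub>R (a - \<rho> n)" and y_near: "norm (y n - x) \<le> lam n"
    and \<rho>_bounded: "norm (\<rho> n) \<le> 1" and \<rho>_x: "- lam n \<le> \<rho> n \<bullet> x"
    and \<rho>_polar: "u \<in> U \<Longrightarrow> \<rho> n \<bullet> u \<le> 0" and y_dual: "u \<in> U \<Longrightarrow> 0 \<le> (y n - x) \<bullet> u" for n u
    using closest_point_cone_dual_shift[OF U x a(3) lam_pos[of n]] a(2) unfolding y_def \<rho>_def by auto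
  have "y n \<in> S" for n
    using S(2) closest_point_in_set[OF U(1)] x by (auto simp: y_def)
  then have \<rho>S: "\<rho> n \<in> S" for n
    using S x a(1) by (auto simp: \<rho>_def intro!: subspace_scale subspace_diff subspace_add)
  have "compact (cball 0 1 \<inter> S)"
    by (rule compact_Int_closed[OF compact_cball closed_subspace[OF S(1)]])
  then obtain l r where l: "l \<in> S" and r: "strict_mono r" and \<rho>_r: "(\<rho> \<circ> r) \<longlonglongrightarrow> l"
    using compact_imp_seq_compact seq_compactE \<rho>_bounded \<rho>S by (metis IntE IntI mem_cball_0)
  have lam_r: "(lam \<circ> r) \<longlonglongrightarrow> 0" by (rule LIMSEQ_subseq_LIMSEQ[OF lam_0 r])
  have l_polar: "l \<bullet> u \<le> 0" if "u \<in> U" for u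
  proof (rule tendsto_le[OF trivial_limit_sequentially tendsto_const])
    show "(\<lambda>n. (\<rho> \<circ> r) n \<bullet> u) \<longlonglongrightarrow> l \<bullet> u" by (intro tendsto_intros \<rho>_r)
  qed (use \<rho>_polar[OF that] in auto)
  have "0 \<le> l \<bullet> x"
  proof (rule tendsto_le[OF trivial_limit_sequentially])
    show "(\<lambda>n. (\<rho> \<circ> r) n \<bullet> x) \<longlonglongrightarrow> l \<bullet> x" by (intro tendsto_intros \<rho>_r)
    show "(\<lambda>n. - (lam \<circ> r) n) \<longlonglongrightarrow> 0" using tendsto_minus[OF lam_r] by simp
  qed (use \<rho>_x in auto)
  with l_polar[OF x] have "x \<bullet> l = 0" by (simp add: inner_commute)
  with l_polar have l_normal: "\<forall>y\<in>U. (y - x) \<bullet> l \<le> 0"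
    using cone_normal_iff[OF U(3) x] by (simp add: inner_commute)
  have "0 \<le> L (a - l)"
  proof (rule has_derivative_nonneg_along_approach[OF D lam_r])
    show "(\<lambda>n. a - (\<rho> \<circ> r) n) \<longlonglongrightarrow> a - l" by (intro tendsto_intros \<rho>_r)
    show "\<forall>\<^sub>F n in sequentially. \<psi> x \<le> \<psi> (x + (lam \<circ> r) n *\<^sub>R (a - (\<rho> \<circ> r) n))"
      using order_tendstoD(2)[OF lam_r e]
    proof eventually_elim
      case (elim n)
      then have "norm (y (r n) - x) < e" using y_near[of "r n"] by simp
      then have "\<psi> x \<le> \<psi> (y (r n))"
        using min_dual closest_point_in_set[OF U(1)] x y_dual by (auto simp: y_def)
      then show ?case using y_x[of "r n"] by (metis comp_apply add.commute diff_add_cancel)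
    qed
  qed (simp add: lam_pos)
  then have "L l \<le> L a" using has_derivative_linear[OF D] by (simp add: linear_diff)
  with l l_normal show ?thesis by blast
qed

lemma cone_normal_with_nonpos_derivative:
  fixes U S :: "'a::euclidean_space set" and \<psi> :: "'a \<Rightarrow> real"
  assumes S: "subspace S" "U \<subseteq> S"
    and U: "closed U" "convex U" "cone U" and x: "x \<in> U"
    and n0: "n0 \<in> S" "norm n0 = 1" "\<forall>y\<in>U. (y - x) \<bullet> n0 \<le> 0"
    and D: "(\<psi> has_derivative L) (at x)" and e: "0 < e"
    and min_dual: "\<And>y. y \<in> U \<Longrightarrow> \<forall>u\<in>U. 0 \<le> (y - x) \<bullet> u \<Longrightarrow> norm (y - x) < e \<Longrightarrow> \<psi> x \<le> \<psi> y"
  shows "\<exists>\<nu>\<in>S. norm \<nu> = 1 \<and> (\<forall>y\<in>U. (y - x) \<bullet> \<nu> \<le> 0) \<and> L \<nu> \<le> 0"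
proof (cases "L n0 \<le> 0")
  case True
  then show ?thesis using n0 by blast
next
  case False
  have lin: "linear L" using D by (rule has_derivative_linear)
  have "- n0 \<in> S" using S(1) n0(1) by (rule subspace_neg)
  moreover have "norm (- n0) = 1" using n0(2) by simp
  moreover have "\<forall>u\<in>U. 0 \<le> - n0 \<bullet> u"
    using n0(3) cone_normal_iff[OF U(3) x] by (auto simp: inner_commute)
  ultimately obtain l where l: "l \<in> S" "\<forall>y\<in>U. (y - x) \<bullet> l \<le> 0" "L l \<le> L (- n0)"
    using cone_normal_below_dual_descent[OF S U x _ _ _ D e min_dual] by blast
  then have Ll: "L l < 0" using False by (simp add: linear_neg[OF lin])
  then have "l \<noteq> 0" using linear_0[OF lin] by auto
  show ?thesis
  proof (intro bexI conjI ballI)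
    show "l /\<^sub>R norm l \<in> S" using l(1) S(1) by (simp add: subspace_scale)
    show "norm (l /\<^sub>R norm l) = 1" using \<open>l \<noteq> 0\<close> by simp
    show "(y - x) \<bullet> (l /\<^sub>R norm l) \<le> 0" if "y \<in> U" for y
      using l(2) that by (simp add: mult_nonneg_nonpos)
    show "L (l /\<^sub>R norm l) \<le> 0"
      using Ll by (simp add: linear_scale[OF lin] mult_nonneg_nonpos)
  qed
qed

lemma subspace_powK: "subspace E \<Longrightarrow> subspace (powK E :: ('e::real_vector^'k) set)"
  unfolding subspace_def powK_def by auto

lemma UKbar_subset_powK: "Cbar \<subseteq> E \<Longrightarrow> UKbar Cbar \<subseteq> (powK E :: ('e::real_vector^'k::{finite,linorder}) set)"
  unfolding UKbar_def powK_def by auto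

lemma UKbar_eq_Inter_vimage:
  "UKbar Cbar = (\<Inter>k. (\<lambda>x. x $ k) -` Cbar) \<inter> (\<Inter>k. \<Inter>k'\<in>{k'. is_succ k k'}. (\<lambda>x. x $ k' - x $ k) -` Cbar)"
  by (auto simp: UKbar_def)

lemma closed_UKbar:
  "closed Cbar \<Longrightarrow> closed (UKbar Cbar :: ('e::real_normed_vector^'k::{finite,linorder}) set)"
  unfolding UKbar_eq_Inter_vimage
  by (intro closed_Int closed_INT ballI closed_vimage_vec_nth continuous_closed_vimage)
    (auto intro!: continuous_intros)

lemma convex_UKbar:
  "convex Cbar \<Longrightarrow> convex (UKbar Cbar :: ('e::real_normed_vector^'k::{finite,linorder}) set)"
  unfolding UKbar_eq_Inter_vimage
  by (intro convex_Int convex_INT ballI convex_linear_vimage)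
    (auto intro!: linear_compose_sub bounded_linear.linear[OF bounded_linear_vec_nth])

lemma cone_UKbar: "cone Cbar \<Longrightarrow> cone (UKbar Cbar :: ('e::real_vector^'k::{finite,linorder}) set)"
  unfolding cone_def UKbar_def by (simp flip: scaleR_right_diff_distrib)

lemma UKbar_boundary_normal:
  fixes x :: "'e::real_inner^'k::{finite,linorder}"
  assumes E: "subspace E" and x: "x \<in> UKbar Cbar" "x \<notin> UK C"
    and supporting: "\<And>c. c \<in> Cbar \<Longrightarrow> c \<notin> C \<Longrightarrow> \<exists>w\<in>E. w \<noteq> 0 \<and> (\<forall>c'\<in>Cbar. 0 \<le> c' \<bullet> w) \<and> c \<bullet> w = 0"
  shows "\<exists>n\<in>powK E. norm n = 1 \<and> (\<forall>y\<in>UKbar Cbar. (y - x) \<bullet> n \<le> 0)"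
proof -
  have "\<exists>n\<in>powK E. n \<noteq> 0 \<and> (\<forall>y\<in>UKbar Cbar. (y - x) \<bullet> n \<le> 0)"
  proof (cases "\<forall>k. x $ k \<in> C")
    case False
    then obtain k where "x $ k \<notin> C" by blast
    moreover have "x $ k \<in> Cbar" using x by (auto simp: UKbar_def)
    ultimately obtain w where w: "w \<in> E" "w \<noteq> 0" "\<forall>c'\<in>Cbar. 0 \<le> c' \<bullet> w" "x $ k \<bullet> w = 0"
      using supporting by blast
    show ?thesis
    proof (intro bexI conjI ballI)
      show "- axis k w \<in> powK E" using w(1) E by (auto simp: powK_def axis_def subspace_neg subspace_0)
      show "- axis k w \<noteq> 0" using w(2) by simp
      show "(y - x) \<bullet> - axis k w \<le> 0" if "y \<in> UKbar Cbar" for y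
        using that w by (simp add: UKbar_def inner_axis inner_diff_left)
    qed
  next
    case True
    then obtain k k' where kk': "is_succ k k'" "x $ k' - x $ k \<notin> C" using x by (auto simp: UK_def)
    moreover have "x $ k' - x $ k \<in> Cbar" using x kk' by (auto simp: UKbar_def)
    ultimately obtain w where w: "w \<in> E" "w \<noteq> 0" "\<forall>c'\<in>Cbar. 0 \<le> c' \<bullet> w" "(x $ k' - x $ k) \<bullet> w = 0"
      using supporting by blast
    have "k \<noteq> k'" using kk'(1) by (auto simp: is_succ_def)
    show ?thesis
    proof (intro bexI conjI ballI)
      show "axis k w - axis k' w \<in> powK E" using w(1) E by (auto simp: powK_def axis_def subspace_neg subspace_0)
      show "axis k w - axis k' w \<noteq> 0"
        using w(2) \<open>k \<noteq> k'\<close> by (auto simp: vec_eq_iff axis_def)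
      show "(y - x) \<bullet> (axis k w - axis k' w) \<le> 0" if "y \<in> UKbar Cbar" for y
      proof -
        have "0 \<le> (y $ k' - y $ k) \<bullet> w" using that kk'(1) w(3) by (auto simp: UKbar_def)
        then show ?thesis using w(4)
          by (simp add: inner_axis inner_diff_left inner_diff_right algebra_simps)
      qed
    qed
  qed
  then obtain n where n: "n \<in> powK E" "n \<noteq> 0" "\<forall>y\<in>UKbar Cbar. (y - x) \<bullet> n \<le> 0" by blast
  show ?thesis
  proof (intro bexI conjI ballI)
    show "n /\<^sub>R norm n \<in> powK E" using n(1) subspace_scale[OF subspace_powK[OF E]] by blast
    show "norm (n /\<^sub>R norm n) = 1" using n(2) by simp
    show "(y - x) \<bullet> (n /\<^sub>R norm n) \<le> 0" if "y \<in> UKbar Cbar" for y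
      using n(3) that by (simp add: mult_nonneg_nonpos)
  qed
qed

lemma smooth_on_set_has_derivative_slice:
  assumes "smooth_on_set D \<phi>" "(t, x) \<in> D"
  obtains L where "((\<lambda>y. \<phi> (t, y)) has_derivative L) (at x)"
proof -
  obtain W \<phi>' where "D \<subseteq> W" "\<forall>p\<in>W. (\<phi> has_derivative \<phi>' p) (at p)"
    using assms(1) unfolding smooth_on_set_def smooth_on_def by blast
  then have "(\<phi> has_derivative \<phi>' (t, x)) (at (t, x))" using assms(2) by blast
  from diff_chain_at[OF has_derivative_Pair[OF has_derivative_const has_derivative_ident] this]
  show ?thesis by (intro that) (simp add: o_def)
qed

lemma inner_xgrad:
  assumes "((\<lambda>y. \<phi> (t, y)) has_derivative L) (at x)"
  shows "\<nu> \<bullet> xgrad \<phi> t x = L \<nu>"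
proof -
  have L: "linear L" using assms by (rule has_derivative_linear)
  have "\<nu> \<bullet> xgrad \<phi> t x = (\<Sum>b\<in>Basis. (\<nu> \<bullet> b) * L b)"
    by (simp add: xgrad_def frechet_derivative_at[OF assms, symmetric] inner_sum_right mult.commute)
  also have "\<dots> = L (\<Sum>b\<in>Basis. (\<nu> \<bullet> b) *\<^sub>R b)" by (simp add: linear_sum[OF L] linear_scale[OF L])
  also have "\<dots> = L \<nu>" by (simp add: euclidean_representation)
  finally show ?thesis .
qed

lemma tilted_boundary_normal_derivative_nonpos:
  fixes E C Cbar :: "'e::euclidean_space set"
    and f \<phi> :: "real \<times> ('e^'k::{finite,linorder}) \<Rightarrow> real" and x :: "'e^'k::{finite,linorder}" and T :: ereal
  assumes E: "subspace E" "Cbar \<subseteq> E"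
    and Cbar: "closed Cbar" "convex Cbar" "cone Cbar"
    and supporting: "\<And>c. c \<in> Cbar \<Longrightarrow> c \<notin> C \<Longrightarrow> \<exists>w\<in>E. w \<noteq> 0 \<and> (\<forall>c'\<in>Cbar. 0 \<le> c' \<bullet> w) \<and> c \<bullet> w = 0"
    and tilted: "tilted T (UKbar Cbar) (dual_cone E (UKbar Cbar)) f"
    and t: "0 < t" "ereal t < T" and x: "x \<in> UKbar Cbar - UK C"
    and smooth: "smooth_on_set (dom_open T (UKbar Cbar)) \<phi>"
    and max: "local_max_on (dom_open T (UKbar Cbar)) (\<lambda>p. f p - \<phi> p) (t, x)"
  shows "(INF \<nu>\<in>normals E (UKbar Cbar) x. ereal (\<nu> \<bullet> xgrad \<phi> t x)) \<le> 0"
proof -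
  let ?U = "UKbar Cbar :: ('e^'k::{finite,linorder}) set"
  have tx: "(t, x) \<in> dom_open T ?U" using t x by (simp add: dom_open_def)
  obtain L where L: "((\<lambda>y. \<phi> (t, y)) has_derivative L) (at x)"
    using smooth_on_set_has_derivative_slice[OF smooth tx] .
  obtain e where e: "0 < e" "\<forall>q\<in>dom_open T ?U. dist q (t, x) < e \<longrightarrow> f q - \<phi> q \<le> f (t, x) - \<phi> (t, x)"
    using max unfolding local_max_on_def by blast
  have min_dual: "\<phi> (t, x) \<le> \<phi> (t, y)"
    if y: "y \<in> ?U" "\<forall>u\<in>?U. 0 \<le> (y - x) \<bullet> u" "norm (y - x) < e" for y
  proof -
    have "f (t, y) - \<phi> (t, y) \<le> f (t, x) - \<phi> (t, x)"
      using e(2) t y by (simp add: dom_open_def dist_Pair_Pair dist_norm)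
    moreover have "y - x \<in> powK E"
      using subspace_diff[OF subspace_powK[OF E(1)]] UKbar_subset_powK[OF E(2)] x y(1) by blast
    then have "y - x \<in> dual_cone E ?U" using y(2) by (simp add: dual_cone_def)
    then have "f (t, x) \<le> f (t, y)"
      using tilted[unfolded tilted_def, rule_format, of t x y] t x y(1) by simp
    ultimately show ?thesis by linarith
  qed
  obtain n0 where n0: "n0 \<in> powK E" "norm n0 = 1" "\<forall>y\<in>?U. (y - x) \<bullet> n0 \<le> 0"
    using UKbar_boundary_normal[OF E(1) _ _ supporting] x by blast
  obtain \<nu> where \<nu>: "\<nu> \<in> powK E" "norm \<nu> = 1" "\<forall>y\<in>?U. (y - x) \<bullet> \<nu> \<le> 0" "L \<nu> \<le> 0"
    using cone_normal_with_nonpos_derivative[OF subspace_powK[OF E(1)] UKbar_subset_powK[OF E(2)]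
        closed_UKbar[OF Cbar(1)] convex_UKbar[OF Cbar(2)] cone_UKbar[OF Cbar(3)] _ n0 L e(1) min_dual] x
    by blast
  then have "\<nu> \<in> normals E ?U x" by (simp add: normals_def)
  moreover have "\<nu> \<bullet> xgrad \<phi> t x \<le> 0" using \<nu>(4) inner_xgrad[OF L] by simp
  ultimately show ?thesis by (intro INF_lower2) auto
qed

lemma closed_orthant_closed: "closed (orthant_closed :: (real^'d) set)"
proof -
  have "orthant_closed = (\<Inter>i. (\<lambda>x. x $ i) -` {0::real..})" by (auto simp: orthant_closed_def)
  then show ?thesis by (metis closed_INT closed_atLeast closed_vimage_vec_nth)
qed

lemma convex_orthant_closed: "convex (orthant_closed :: (real^'d) set)"
  by (rule convexI) (auto simp: orthant_closed_def)

lemma cone_orthant_closed: "cone (orthant_closed :: (real^'d) set)"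
  by (auto simp: cone_def orthant_closed_def)

lemma orthant_supporting_hyperplane:
  assumes "c \<in> (orthant_closed :: (real^'d) set)" "c \<notin> orthant_open"
  shows "\<exists>w\<in>UNIV. w \<noteq> 0 \<and> (\<forall>c'\<in>orthant_closed. 0 \<le> c' \<bullet> w) \<and> c \<bullet> w = 0"
proof -
  obtain i where "\<not> 0 < c $ i" using assms(2) by (auto simp: orthant_open_def)
  then have "c $ i = 0" using assms(1) by (auto simp: orthant_closed_def intro: antisym)
  then show ?thesis by (intro bexI[of _ "axis i 1"]) (auto simp: inner_axis orthant_closed_def)
qed

definition outer_product :: "real^'d \<Rightarrow> real^'d^'d" where
  "outer_product v = (\<chi> i j. v $ i * v $ j)"

lemma inner_outer_product: "outer_product v \<bullet> A = v \<bullet> (A *v v)"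
  by (simp add: outer_product_def inner_vec_def matrix_vector_mult_def sum_distrib_left mult_ac)

lemma symmetric_outer_product: "outer_product v \<in> sym_mats"
  by (simp add: sym_mats_def outer_product_def transpose_def vec_eq_iff mult.commute)

lemma subspace_sym_mats: "subspace sym_mats"
  unfolding subspace_def sym_mats_def by (auto simp: transpose_def vec_eq_iff)

lemma psd_mats_eq_Inter_halfspaces: "psd_mats = sym_mats \<inter> (\<Inter>v. {A. outer_product v \<bullet> A \<ge> 0})"
  by (auto simp: psd_mats_def sym_mats_def inner_outer_product)

lemma psd_subset_sym_mats: "psd_mats \<subseteq> sym_mats"
  unfolding psd_mats_eq_Inter_halfspaces by blast

lemma closed_psd_mats: "closed psd_mats"
  unfolding psd_mats_eq_Inter_halfspaces
  by (intro closed_Int closed_subspace subspace_sym_mats closed_INT ballI closed_halfspace_ge)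

lemma convex_psd_mats: "convex psd_mats"
  unfolding psd_mats_eq_Inter_halfspaces
  by (intro convex_Int subspace_imp_convex subspace_sym_mats convex_INT ballI convex_halfspace_ge)

lemma cone_psd_mats: "cone psd_mats"
  unfolding psd_mats_eq_Inter_halfspaces cone_def by (auto intro: subspace_scale[OF subspace_sym_mats])

lemma psd_supporting_hyperplane:
  assumes "c \<in> (psd_mats :: (real^'d^'d) set)" "c \<notin> pd_mats"
  shows "\<exists>w\<in>sym_mats. w \<noteq> 0 \<and> (\<forall>c'\<in>psd_mats. 0 \<le> c' \<bullet> w) \<and> c \<bullet> w = 0"
proof -
  obtain v where v: "v \<noteq> 0" "\<not> 0 < v \<bullet> (c *v v)" using assms by (auto simp: psd_mats_def pd_mats_def)
  have inner_v: "A \<bullet> outer_product v = v \<bullet> (A *v v)" for A by (metis inner_commute inner_outer_product)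
  show ?thesis
  proof (intro bexI[OF _ symmetric_outer_product[of v]] conjI ballI)
    obtain i where "v $ i \<noteq> 0" using v(1) by (auto simp: vec_eq_iff)
    then show "outer_product v \<noteq> 0" by (auto simp: outer_product_def vec_eq_iff)
    show "c \<bullet> outer_product v = 0"
      using v(2) assms(1) by (auto simp: psd_mats_def inner_v intro: antisym)
    show "0 \<le> c' \<bullet> outer_product v" if "c' \<in> psd_mats" for c'
      using that by (simp add: psd_mats_def inner_v)
  qed
qed

theorem proposition3p6:
  shows
   "(\<forall>(T::ereal) (f :: real \<times> ((real^'d)^('k::{finite,linorder})) \<Rightarrow> real) \<phi> t x.
      0 < T \<longrightarrow>
      continuous_on (dom_closed T (UKbar orthant_closed)) f \<longrightarrow>
      tilted T (UKbar orthant_closed) (dual_cone UNIV (UKbar orthant_closed)) f \<longrightarrow>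
      0 < t \<longrightarrow> ereal t < T \<longrightarrow>
      x \<in> UKbar orthant_closed - UK orthant_open \<longrightarrow>
      smooth_on_set (dom_open T (UKbar orthant_closed)) \<phi> \<longrightarrow>
      local_max_on (dom_open T (UKbar orthant_closed)) (\<lambda>p. f p - \<phi> p) (t, x) \<longrightarrow>
      (INF \<nu>\<in>normals UNIV (UKbar orthant_closed) x. ereal (\<nu> \<bullet> xgrad \<phi> t x)) \<le> 0)
  \<and>
   (\<forall>(T::ereal) (f :: real \<times> ((real^'d^'d)^('k::{finite,linorder})) \<Rightarrow> real) \<phi> t x.
      0 < T \<longrightarrow>
      continuous_on (dom_closed T (UKbar psd_mats)) f \<longrightarrow>
      tilted T (UKbar psd_mats) (dual_cone sym_mats (UKbar psd_mats)) f \<longrightarrow>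
      0 < t \<longrightarrow> ereal t < T \<longrightarrow>
      x \<in> UKbar psd_mats - UK pd_mats \<longrightarrow>
      smooth_on_set (dom_open T (UKbar psd_mats)) \<phi> \<longrightarrow>
      local_max_on (dom_open T (UKbar psd_mats)) (\<lambda>p. f p - \<phi> p) (t, x) \<longrightarrow>
      (INF \<nu>\<in>normals sym_mats (UKbar psd_mats) x. ereal (\<nu> \<bullet> xgrad \<phi> t x)) \<le> 0)"
  using tilted_boundary_normal_derivative_nonpos[OF subspace_UNIV subset_UNIV closed_orthant_closed
      convex_orthant_closed cone_orthant_closed orthant_supporting_hyperplane]
    tilted_boundary_normal_derivative_nonpos[OF subspace_sym_mats psd_subset_sym_mats closed_psd_mats
      convex_psd_mats cone_psd_mats psd_supporting_hyperplane]
  by blast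

end
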